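(* In the Setting below, the subalgebra $N_{\mathcal M}$ of $\mathcal M$ is a Lie algebra.
   Context: Setting. Let $\mathbb F$ be a field of characteristic different from $2$ and $3$. A Malcev algebra is an anticommutative algebra $\mathcal M$ over $\mathbb F$ satisfying $(xz)(yt)=((xy)z)t+((yz)t)x+((zt)x)y+((tx)y)z$. Products are left-normed: $xyz=(xy)z$, $xyzt=((xy)z)t$. Put $J(x,y,z)=xyz+yzx+zxy$ (the Jacobian), $\{x,y,z\}=xyz-xzy+2x(yz)$, and $h(y,z,t,x,u)=\{yz,t,u\}x+\{yz,t,x\}u+\{yx,z,u\}t+\{yu,z,x\}t$. The variety $\mathcal H$ consists of the Malcev algebras satisfying $h(y,z,t,x,u)=0$ identically. Let $L=\mathfrak{sl}_2(\mathbb F)$ with basis $E,H,F$ and products $EH=E$, $FH=-F$, $EF=\tfrac12 H$. Standing assumption: $\mathcal M\in\mathcal H$ contains $L$ as a subalgebra and $mL\neq 0$ for every $0\neq m\in\mathcal M$. Define $N_{\mathcal M}=\{m\in\mathcal M: J(m,a,b)=0\ \forall a,b\in L\}$ (a subalgebra of $\mathcal M$). *)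

theory Defs
  imports Main "HOL.Vector_Spaces"
begin

definition bilinear_prod :: "('a::field \<Rightarrow> 'm::ab_group_add \<Rightarrow> 'm) \<Rightarrow> ('m \<Rightarrow> 'm \<Rightarrow> 'm) \<Rightarrow> bool" where
  "bilinear_prod sm mul \<longleftrightarrow>
     (\<forall>x y z. mul (x + y) z = mul x z + mul y z) \<and>
     (\<forall>x y z. mul x (y + z) = mul x y + mul x z) \<and>
     (\<forall>c x y. mul (sm c x) y = sm c (mul x y)) \<and>
     (\<forall>c x y. mul x (sm c y) = sm c (mul x y))"

definition anticommutative :: "('m::ab_group_add \<Rightarrow> 'm \<Rightarrow> 'm) \<Rightarrow> bool" where
  "anticommutative mul \<longleftrightarrow> (\<forall>x. mul x x = 0)"

definition malcev_identity :: "('m::ab_group_add \<Rightarrow> 'm \<Rightarrow> 'm) \<Rightarrow> bool" where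
  "malcev_identity mul \<longleftrightarrow> (\<forall>x y z t.
     mul (mul x z) (mul y t) =
       mul (mul (mul x y) z) t + mul (mul (mul y z) t) x
     + mul (mul (mul z t) x) y + mul (mul (mul t x) y) z)"

definition malcev_algebra :: "('a::field \<Rightarrow> 'm::ab_group_add \<Rightarrow> 'm) \<Rightarrow> ('m \<Rightarrow> 'm \<Rightarrow> 'm) \<Rightarrow> bool" where
  "malcev_algebra sm mul \<longleftrightarrow> Vector_Spaces.vector_space sm \<and> bilinear_prod sm mul
     \<and> anticommutative mul \<and> malcev_identity mul"

definition jac :: "('m::ab_group_add \<Rightarrow> 'm \<Rightarrow> 'm) \<Rightarrow> 'm \<Rightarrow> 'm \<Rightarrow> 'm \<Rightarrow> 'm" where
  "jac mul x y z = mul (mul x y) z + mul (mul y z) x + mul (mul z x) y"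

definition brace :: "('m::ab_group_add \<Rightarrow> 'm \<Rightarrow> 'm) \<Rightarrow> 'm \<Rightarrow> 'm \<Rightarrow> 'm \<Rightarrow> 'm" where
  "brace mul x y z = mul (mul x y) z - mul (mul x z) y + (mul x (mul y z) + mul x (mul y z))"

definition hpoly :: "('m::ab_group_add \<Rightarrow> 'm \<Rightarrow> 'm) \<Rightarrow> 'm \<Rightarrow> 'm \<Rightarrow> 'm \<Rightarrow> 'm \<Rightarrow> 'm \<Rightarrow> 'm" where
  "hpoly mul y z t x u =
     mul (brace mul (mul y z) t u) x + mul (brace mul (mul y z) t x) u
   + mul (brace mul (mul y x) z u) t + mul (brace mul (mul y u) z x) t"

definition in_variety_H :: "('a::field \<Rightarrow> 'm::ab_group_add \<Rightarrow> 'm) \<Rightarrow> ('m \<Rightarrow> 'm \<Rightarrow> 'm) \<Rightarrow> bool" where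
  "in_variety_H sm mul \<longleftrightarrow> malcev_algebra sm mul \<and> (\<forall>y z t x u. hpoly mul y z t x u = 0)"

definition sl2_triple :: "('a::field \<Rightarrow> 'm::ab_group_add \<Rightarrow> 'm) \<Rightarrow> ('m \<Rightarrow> 'm \<Rightarrow> 'm) \<Rightarrow> 'm \<Rightarrow> 'm \<Rightarrow> 'm \<Rightarrow> bool" where
  "sl2_triple sm mul e h f \<longleftrightarrow>
     e \<noteq> h \<and> e \<noteq> f \<and> h \<noteq> f \<and> \<not> module.dependent sm {e, h, f} \<and>
     mul e h = e \<and> mul f h = - f \<and> mul e f = sm (1/2) h"

definition N_set :: "('a::field \<Rightarrow> 'm::ab_group_add \<Rightarrow> 'm) \<Rightarrow> ('m \<Rightarrow> 'm \<Rightarrow> 'm) \<Rightarrow> 'm set \<Rightarrow> 'm set" where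
  "N_set sm mul L = {m. \<forall>a\<in>L. \<forall>b\<in>L. jac mul m a b = 0}"

end

theory Submission
  imports Defs "HOL-Library.List_Lexorder" "HOL-Library.Multiset"
begin

(* Use the basis E, H, G = 2F of L, which has integer structure constants.  Two consequences of
  the Malcev identity hold in every Malcev algebra: Sagle's identity
  J(wx,y,z) = J(w,y,z)x + wJ(x,y,z) - 2J(yz,w,x), and 2J(x,y,z)w = J(w,y,xz) - J(w,x,yz) - J(w,z,xy).
  As L is a Lie algebra closed under the product, Sagle's identity gives NL \<subseteq> N.  The only
  computation specific to sl_2 is J(L,N,N) = 0, an integer combination of Malcev identities for
  E, H, G and elements of N and NL together with Jacobians J(L,L,N) = 0.  Then Sagle's identity gives
  NN \<subseteq> N, the second identity gives J(N,N,N)L = 0, and faithfulness gives J(N,N,N) = 0.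
  Each identity is checked by a verified normaliser for free anticommutative polynomials modulo a
  multiplication table on some of the variables. *)

datatype fterm = Var nat | Prod fterm fterm

type_synonym lincomb = "(int \<times> fterm) list"

type_synonym table = "nat \<Rightarrow> nat \<Rightarrow> (int \<times> nat) option"

(* Products are oriented by the lexicographic order of this prefix code; soundness does not depend
  on the choice of order. *)
fun code_of :: "fterm \<Rightarrow> nat list" where
  "code_of (Var i) = [0, i]"
| "code_of (Prod s t) = 1 # code_of s @ code_of t"

fun table_prod :: "table \<Rightarrow> fterm \<Rightarrow> fterm \<Rightarrow> (int \<times> fterm) option" where
  "table_prod tbl (Var i) (Var j) = map_option (apsnd Var) (tbl i j)"
| "table_prod tbl _ _ = None"

fun mul_monomial :: "table \<Rightarrow> int \<times> fterm \<Rightarrow> int \<times> fterm \<Rightarrow> int \<times> fterm" where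
  "mul_monomial tbl (c, s) (d, t) =
     (case table_prod tbl s t of
        Some (k, u) \<Rightarrow> (c * d * k, u)
      | None \<Rightarrow>
          if s = t then (0, s)
          else if code_of s < code_of t then (c * d, Prod s t) else (- (c * d), Prod t s))"

fun canonical :: "table \<Rightarrow> fterm \<Rightarrow> int \<times> fterm" where
  "canonical tbl (Var i) = (1, Var i)"
| "canonical tbl (Prod s t) = mul_monomial tbl (canonical tbl s) (canonical tbl t)"

fun collect :: "lincomb \<Rightarrow> lincomb" where
  "collect ((c, s) # (d, t) # p) =
     (if s = t then collect ((c + d, s) # p) else (c, s) # collect ((d, t) # p))"
| "collect p = p"

definition normal_form :: "table \<Rightarrow> lincomb \<Rightarrow> lincomb" where
  "normal_form tbl p = filter (\<lambda>(c, t). c \<noteq> 0)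
     (collect (sort_key (code_of \<circ> snd) (map (\<lambda>(c, t). apfst ((*) c) (canonical tbl t)) p)))"

definition scale_lc :: "int \<Rightarrow> lincomb \<Rightarrow> lincomb" where
  "scale_lc k p = map (apfst ((*) k)) p"

definition mul_lc :: "lincomb \<Rightarrow> lincomb \<Rightarrow> lincomb" where
  "mul_lc p q = [(c * d, Prod s t). (c, s) \<leftarrow> p, (d, t) \<leftarrow> q]"

definition jac_lc :: "fterm \<Rightarrow> fterm \<Rightarrow> fterm \<Rightarrow> lincomb" where
  "jac_lc x y z = [(1, Prod (Prod x y) z), (1, Prod (Prod y z) x), (1, Prod (Prod z x) y)]"

definition malcev_lc :: "fterm \<Rightarrow> fterm \<Rightarrow> fterm \<Rightarrow> fterm \<Rightarrow> lincomb" where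
  "malcev_lc x y z t =
     [(1, Prod (Prod x z) (Prod y t)), (-1, Prod (Prod (Prod x y) z) t), (-1, Prod (Prod (Prod y z) t) x),
      (-1, Prod (Prod (Prod z t) x) y), (-1, Prod (Prod (Prod t x) y) z)]"

datatype relator = Malcev fterm fterm fterm fterm | Jacobi fterm fterm fterm | Times relator fterm

fun relator_lc :: "relator \<Rightarrow> lincomb" where
  "relator_lc (Malcev x y z t) = malcev_lc x y z t"
| "relator_lc (Jacobi x y z) = jac_lc x y z"
| "relator_lc (Times r t) = mul_lc (relator_lc r) [(1, t)]"

fun relator_ok :: "(fterm \<Rightarrow> fterm \<Rightarrow> fterm \<Rightarrow> bool) \<Rightarrow> relator \<Rightarrow> bool" where
  "relator_ok P (Malcev x y z t) = True"
| "relator_ok P (Jacobi x y z) = P x y z"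
| "relator_ok P (Times r t) = relator_ok P r"

definition certifies ::
  "table \<Rightarrow> (fterm \<Rightarrow> fterm \<Rightarrow> fterm \<Rightarrow> bool) \<Rightarrow> (int \<times> relator) list \<Rightarrow> int \<Rightarrow> lincomb \<Rightarrow> bool"
where
  "certifies tbl P rs d tgt \<longleftrightarrow> (\<forall>(c, r) \<in> set rs. relator_ok P r) \<and>
     normal_form tbl (concat (map (\<lambda>(c, r). scale_lc c (relator_lc r)) rs) @ scale_lc (- d) tgt) = []"

locale anticomm_algebra = vector_space sm
  for sm :: "'a::field \<Rightarrow> 'm::ab_group_add \<Rightarrow> 'm" +
  fixes mul :: "'m \<Rightarrow> 'm \<Rightarrow> 'm"
  assumes bilinear: "bilinear_prod sm mul" and anticomm: "anticommutative mul"
begin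

lemma mul_add_left: "mul (x + y) z = mul x z + mul y z"
  and mul_add_right: "mul x (y + z) = mul x y + mul x z"
  and mul_scale_left: "mul (sm c x) y = sm c (mul x y)"
  and mul_scale_right: "mul x (sm c y) = sm c (mul x y)"
  using bilinear by (simp_all add: bilinear_prod_def)

lemma linear_mul_left: "Vector_Spaces.linear sm sm (\<lambda>x. mul x y)"
  by (simp add: linear_iff vector_space_axioms mul_add_left mul_scale_left)

lemma linear_mul_right: "Vector_Spaces.linear sm sm (mul x)"
  by (simp add: linear_iff vector_space_axioms mul_add_right mul_scale_right)

lemma mul_zero_left [simp]: "mul 0 y = 0"
  using mul_scale_left[of 0 0 y] by simp

lemma mul_zero_right [simp]: "mul x 0 = 0"
  using mul_scale_right[of x 0 0] by simp

lemma mul_neg_left: "mul (- x) y = - mul x y"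
  using mul_scale_left[of "-1" x y] by simp

lemma mul_neg_right: "mul x (- y) = - mul x y"
  using mul_scale_right[of x "-1" y] by simp

lemma mul_self [simp]: "mul x x = 0"
  using anticomm by (simp add: anticommutative_def)

lemma mul_anticomm: "mul y x = - mul x y"
proof -
  have "mul (x + y) (x + y) = mul x y + mul y x"
    by (simp only: mul_add_left mul_add_right) simp
  then have "mul x y + mul y x = 0" by (metis mul_self)
  then show ?thesis by (metis add.commute eq_neg_iff_add_eq_0)
qed

lemma jac_cycle: "jac mul x y z = jac mul y z x"
  by (simp add: jac_def ac_simps)

lemma linear_jac_left: "Vector_Spaces.linear sm sm (\<lambda>x. jac mul x y z)"
  by (simp add: linear_iff vector_space_axioms jac_def mul_add_left mul_add_right
      mul_scale_left mul_scale_right scale_right_distrib ac_simps)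

lemma linear_span_into_subspace:
  assumes "Vector_Spaces.linear sm sm f" and "subspace T" and "\<And>a. a \<in> S \<Longrightarrow> f a \<in> T"
    and "x \<in> span S"
  shows "f x \<in> T"
proof -
  interpret vector_space_pair sm sm ..
  have "span S \<subseteq> f -` T"
    using assms(3) by (intro span_minimal linear_subspace_vimage assms(1,2)) auto
  then show ?thesis using assms(4) by auto
qed

lemma linear_eq_0_on_span:
  "Vector_Spaces.linear sm sm f \<Longrightarrow> (\<And>a. a \<in> S \<Longrightarrow> f a = 0) \<Longrightarrow> x \<in> span S \<Longrightarrow> f x = 0"
  using linear_span_into_subspace[of f "{0}" S x] by simp

lemma mul_span_into_subspace:
  assumes "subspace T" and "\<And>a b. a \<in> A \<Longrightarrow> b \<in> B \<Longrightarrow> mul a b \<in> T"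
    and "a \<in> span A" and "b \<in> span B"
  shows "mul a b \<in> T"
proof -
  have "mul a' b \<in> T" if "a' \<in> A" for a'
    by (rule linear_span_into_subspace[OF linear_mul_right assms(1) _ assms(4)]) (use assms(2) that in blast)
  then show ?thesis
    by (rule linear_span_into_subspace[OF linear_mul_left assms(1) _ assms(3)])
qed

lemma jac_eq_0_on_span:
  assumes "\<And>a b c. a \<in> A \<Longrightarrow> b \<in> A \<Longrightarrow> c \<in> A \<Longrightarrow> jac mul a b c = 0"
    and "a \<in> span A" and "b \<in> span A" and "c \<in> span A"
  shows "jac mul a b c = 0"
proof -
  have "(\<lambda>y. jac mul x y z) = (\<lambda>y. jac mul y z x)" "(\<lambda>z. jac mul x y z) = (\<lambda>z. jac mul z x y)" for x y z
    by (rule ext, rule jac_cycle)+ (rule ext, rule jac_cycle[symmetric])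
  then have linear_jac_middle: "Vector_Spaces.linear sm sm (\<lambda>y. jac mul x y z)"
    and linear_jac_right: "Vector_Spaces.linear sm sm (\<lambda>z. jac mul x y z)" for x y z
    using linear_jac_left by metis+
  have "jac mul a' b' c = 0" if "a' \<in> A" "b' \<in> A" for a' b'
    by (rule linear_eq_0_on_span[OF linear_jac_right _ assms(4)]) (use assms(1) that in blast)
  then have "jac mul a' b c = 0" if "a' \<in> A" for a'
    by (rule linear_eq_0_on_span[OF linear_jac_middle _ assms(3)]) (use that in blast)
  then show ?thesis
    by (rule linear_eq_0_on_span[OF linear_jac_left _ assms(2)])
qed

fun eval :: "(nat \<Rightarrow> 'm) \<Rightarrow> fterm \<Rightarrow> 'm" where
  "eval \<rho> (Var i) = \<rho> i"
| "eval \<rho> (Prod s t) = mul (eval \<rho> s) (eval \<rho> t)"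

definition eval_lc :: "(nat \<Rightarrow> 'm) \<Rightarrow> lincomb \<Rightarrow> 'm" where
  "eval_lc \<rho> p = sum_list (map (\<lambda>(c, t). sm (of_int c) (eval \<rho> t)) p)"

definition table_holds :: "table \<Rightarrow> (nat \<Rightarrow> 'm) \<Rightarrow> bool" where
  "table_holds tbl \<rho> \<longleftrightarrow> (\<forall>i j k l. tbl i j = Some (k, l) \<longrightarrow> mul (\<rho> i) (\<rho> j) = sm (of_int k) (\<rho> l))"

lemma eval_lc_Nil [simp]: "eval_lc \<rho> [] = 0"
  and eval_lc_Cons [simp]: "eval_lc \<rho> ((c, t) # p) = sm (of_int c) (eval \<rho> t) + eval_lc \<rho> p"
  and eval_lc_append [simp]: "eval_lc \<rho> (p @ q) = eval_lc \<rho> p + eval_lc \<rho> q"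
  by (simp_all add: eval_lc_def)

lemma eval_lc_sort_key: "eval_lc \<rho> (sort_key f p) = eval_lc \<rho> p"
proof -
  have "mset (map g (sort_key f p)) = mset (map g p)" for g :: "int \<times> fterm \<Rightarrow> 'm"
    by simp
  then show ?thesis
    unfolding eval_lc_def by (metis sum_mset_sum_list)
qed

lemma eval_lc_filter_nonzero: "eval_lc \<rho> (filter (\<lambda>(c, t). c \<noteq> 0) p) = eval_lc \<rho> p"
  by (induction p) auto

lemma eval_lc_collect: "eval_lc \<rho> (collect p) = eval_lc \<rho> p"
  by (induction p rule: collect.induct) (auto simp: scale_left_distrib add.assoc)

lemma mul_scale_scale: "mul (sm a x) (sm b y) = sm (a * b) (mul x y)"
  by (simp add: mul_scale_left mul_scale_right mult.commute)

lemma mul_monomial_sound: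
  assumes "table_holds tbl \<rho>"
  shows "eval_lc \<rho> [mul_monomial tbl (c, s) (d, t)] = mul (eval_lc \<rho> [(c, s)]) (eval_lc \<rho> [(d, t)])"
proof (cases "table_prod tbl s t")
  case None
  consider "s = t" | "s \<noteq> t" "code_of s < code_of t" | "s \<noteq> t" "\<not> code_of s < code_of t"
    by blast
  then show ?thesis
  proof cases
    case 3
    then show ?thesis
      using None mul_anticomm[of "eval \<rho> s" "eval \<rho> t"] by (simp add: mul_scale_scale)
  qed (use None in \<open>simp_all add: mul_scale_scale\<close>)
next
  case (Some ku)
  then obtain i j k l where "s = Var i" "t = Var j" "tbl i j = Some (k, l)" "ku = (k, Var l)"
    by (cases "(tbl, s, t)" rule: table_prod.cases) auto
  then show ?thesis
    using assms Some by (simp add: table_holds_def mul_scale_scale mult.assoc)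
qed

lemma canonical_sound: "table_holds tbl \<rho> \<Longrightarrow> eval_lc \<rho> [canonical tbl t] = eval \<rho> t"
proof (induction t)
  case (Prod s t)
  then show ?case
    using mul_monomial_sound[OF Prod.prems, of "fst (canonical tbl s)" "snd (canonical tbl s)"
        "fst (canonical tbl t)" "snd (canonical tbl t)"]
    by simp
qed simp

lemma normal_form_sound:
  assumes "table_holds tbl \<rho>"
  shows "eval_lc \<rho> (normal_form tbl p) = eval_lc \<rho> p"
proof -
  have "eval_lc \<rho> [apfst ((*) c) (canonical tbl t)] = sm (of_int c) (eval \<rho> t)" for c t
    using canonical_sound[OF assms, of t] by (cases "canonical tbl t") (simp flip: scale_scale)
  then have "eval_lc \<rho> (map (\<lambda>(c, t). apfst ((*) c) (canonical tbl t)) p) = eval_lc \<rho> p"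
    by (induction p) (auto simp del: eval_lc_Cons simp: eval_lc_def)
  then show ?thesis
    by (simp add: normal_form_def eval_lc_filter_nonzero eval_lc_collect eval_lc_sort_key)
qed

lemma eval_lc_scale_lc: "eval_lc \<rho> (scale_lc k p) = sm (of_int k) (eval_lc \<rho> p)"
  by (induction p) (auto simp: scale_lc_def scale_right_distrib)

lemma eval_lc_mul_lc: "eval_lc \<rho> (mul_lc p q) = mul (eval_lc \<rho> p) (eval_lc \<rho> q)"
proof -
  have "eval_lc \<rho> (map (\<lambda>(d, t). (c * d, Prod s t)) q) = mul (sm (of_int c) (eval \<rho> s)) (eval_lc \<rho> q)"
    for c s by (induction q) (auto simp: mul_add_right mul_scale_scale)
  then show ?thesis
    by (induction p) (auto simp: mul_lc_def mul_add_left)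
qed

lemma eval_lc_jac_lc: "eval_lc \<rho> (jac_lc x y z) = jac mul (eval \<rho> x) (eval \<rho> y) (eval \<rho> z)"
  by (simp add: jac_lc_def jac_def add.assoc)

end

locale malcev = anticomm_algebra +
  assumes malcev: "malcev_identity mul"
begin

lemma eval_lc_malcev_lc: "eval_lc \<rho> (malcev_lc x y z t) = 0"
  using malcev unfolding malcev_identity_def by (simp add: malcev_lc_def algebra_simps)

lemma relator_sound:
  assumes "\<And>x y z. P x y z \<Longrightarrow> jac mul (eval \<rho> x) (eval \<rho> y) (eval \<rho> z) = 0"
  shows "relator_ok P r \<Longrightarrow> eval_lc \<rho> (relator_lc r) = 0"
  by (induction r) (auto simp: eval_lc_malcev_lc eval_lc_jac_lc eval_lc_mul_lc assms)

lemma certificate_sound: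
  assumes "table_holds tbl \<rho>"
    and "\<And>x y z. P x y z \<Longrightarrow> jac mul (eval \<rho> x) (eval \<rho> y) (eval \<rho> z) = 0"
    and "(of_int d :: 'a) \<noteq> 0" and "certifies tbl P rs d tgt"
  shows "eval_lc \<rho> tgt = 0"
proof -
  define rels where "rels = concat (map (\<lambda>(c, r). scale_lc c (relator_lc r)) rs)"
  have "\<forall>(c, r) \<in> set rs. relator_ok P r"
    using assms(4) by (simp add: certifies_def)
  then have "eval_lc \<rho> rels = 0"
    unfolding rels_def by (induction rs) (auto simp: eval_lc_scale_lc relator_sound[OF assms(2)])
  moreover have "eval_lc \<rho> (rels @ scale_lc (- d) tgt) = 0"
    using normal_form_sound[OF assms(1), of "rels @ scale_lc (- d) tgt"] assms(4)
    by (simp only: certifies_def rels_def eval_lc_Nil)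
  ultimately show ?thesis
    using assms(3) by (simp add: eval_lc_scale_lc)
qed

lemma malcev_consequence:
  assumes "certifies (\<lambda>_ _. None) (\<lambda>_ _ _. False) rs 1 tgt"
  shows "eval_lc \<rho> tgt = 0"
  using certificate_sound[OF _ _ _ assms] by (simp add: table_holds_def)

lemma sagle_identity:
  "jac mul (mul w x) y z = mul (jac mul w y z) x + mul w (jac mul x y z) - sm 2 (jac mul (mul y z) w x)"
proof -
  have "eval_lc (\<lambda>i. [w, x, y, z] ! i)
     (jac_lc (Prod (Var 0) (Var 1)) (Var 2) (Var 3) @
      scale_lc (-1) (mul_lc (jac_lc (Var 0) (Var 2) (Var 3)) [(1, Var 1)]) @
      scale_lc (-1) (mul_lc [(1, Var 0)] (jac_lc (Var 1) (Var 2) (Var 3))) @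
      scale_lc 2 (jac_lc (Prod (Var 2) (Var 3)) (Var 0) (Var 1))) = 0"
    by (rule malcev_consequence[where rs =
          "[(1, Malcev (Var 0) (Var 1) (Var 3) (Var 2)), (1, Malcev (Var 0) (Var 2) (Var 1) (Var 3)),
            (1, Malcev (Var 0) (Var 2) (Var 3) (Var 1))]"])
      code_simp
  then show ?thesis
    by (simp add: eval_lc_scale_lc eval_lc_mul_lc eval_lc_jac_lc algebra_simps)
qed

lemma jac_mul_identity:
  "sm 2 (mul (jac mul x y z) w) = jac mul w y (mul x z) - jac mul w x (mul y z) - jac mul w z (mul x y)"
proof -
  have "eval_lc (\<lambda>i. [w, x, y, z] ! i)
     (scale_lc 2 (mul_lc (jac_lc (Var 1) (Var 2) (Var 3)) [(1, Var 0)]) @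
      jac_lc (Var 0) (Var 1) (Prod (Var 2) (Var 3)) @
      scale_lc (-1) (jac_lc (Var 0) (Var 2) (Prod (Var 1) (Var 3))) @
      jac_lc (Var 0) (Var 3) (Prod (Var 1) (Var 2))) = 0"
    by (rule malcev_consequence[where rs =
          "[(-1, Malcev (Var 0) (Var 1) (Var 2) (Var 3)), (-1, Malcev (Var 0) (Var 2) (Var 3) (Var 1)),
            (-1, Malcev (Var 0) (Var 3) (Var 1) (Var 2))]"])
      code_simp
  then show ?thesis
    by (simp add: eval_lc_scale_lc eval_lc_mul_lc eval_lc_jac_lc algebra_simps)
qed

end

(* In the certificates below, variables 0, 1, 2 stand for E, H, G and variables 3, 4 for elements of N. *)
definition sl2_table :: table where
  "sl2_table i j = map_of [((0, 1), (1, 0)), ((1, 0), (-1, 0)), ((2, 1), (-1, 2)), ((1, 2), (1, 2)),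
     ((0, 2), (1, 1)), ((2, 0), (-1, 1))] (i, j)"

abbreviation (input) vE :: fterm where "vE \<equiv> Var 0"
abbreviation (input) vH :: fterm where "vH \<equiv> Var 1"
abbreviation (input) vG :: fterm where "vG \<equiv> Var 2"
abbreviation (input) vX :: fterm where "vX \<equiv> Var 3"
abbreviation (input) vY :: fterm where "vY \<equiv> Var 4"

definition sl2_letter :: "fterm \<Rightarrow> bool" where
  "sl2_letter t \<longleftrightarrow> t \<in> {vE, vH, vG}"

fun N_term :: "fterm \<Rightarrow> bool" where
  "N_term (Var i) \<longleftrightarrow> i = 3 \<or> i = 4"
| "N_term (Prod s t) \<longleftrightarrow> N_term s \<and> sl2_letter t \<or> sl2_letter s \<and> N_term t"

definition LLN_triple :: "fterm \<Rightarrow> fterm \<Rightarrow> fterm \<Rightarrow> bool" where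
  "LLN_triple x y z \<longleftrightarrow>
     sl2_letter x \<and> sl2_letter y \<and> N_term z \<or> sl2_letter x \<and> N_term y \<and> sl2_letter z
   \<or> N_term x \<and> sl2_letter y \<and> sl2_letter z"

locale sl2_in_malcev = malcev sm mul
  for sm :: "'a::field \<Rightarrow> 'm::ab_group_add \<Rightarrow> 'm" and mul +
  fixes E H F :: 'm
  assumes E_H: "mul E H = E" and F_H: "mul F H = - F" and E_F: "mul E F = sm (1/2) H"
    and two_nonzero: "(2::'a) \<noteq> 0"
begin

definition G where "G = F + F"

lemma half_add_half: "sm (1/2) v + sm (1/2) v = v"
proof -
  have "(1/2 + 1/2 :: 'a) = 1"
    using two_nonzero by (simp add: add_divide_distrib[symmetric])
  then show ?thesis by (metis scale_left_distrib scale_one)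
qed

lemma F_eq_half_G: "F = sm (1/2) G"
  by (simp add: G_def scale_right_distrib half_add_half)

lemma sl2_mult_table:
  "mul E H = E" "mul H E = - E" "mul G H = - G" "mul H G = G" "mul E G = H" "mul G E = - H"
proof -
  have E_G: "mul E G = H" by (simp add: G_def mul_add_right E_F half_add_half)
  have G_H: "mul G H = - G" by (simp add: G_def mul_add_left F_H)
  show "mul E H = E" "mul G H = - G" "mul E G = H"
    using E_H E_G G_H by auto
  show "mul H E = - E" "mul H G = G" "mul G E = - H"
    by (subst mul_anticomm, simp add: E_H E_G G_H)+
qed

definition L where "L = span {E, H, G}"

lemma span_EHF: "span {E, H, F} = L"
proof -
  have "sm (1/2) G \<in> span {E, H, G}"
    by (intro span_scale span_base) simp
  then have "F \<in> span {E, H, G}"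
    unfolding F_eq_half_G[symmetric] .
  moreover have "G \<in> span {E, H, F}"
    unfolding G_def by (intro span_add span_base) simp_all
  ultimately show ?thesis
    unfolding L_def span_eq by (auto intro: span_base)
qed

lemma generators_in_L: "E \<in> L" "H \<in> L" "G \<in> L"
  by (simp_all add: L_def span_base)

lemma subspace_L: "subspace L"
  by (simp add: L_def)

lemma mul_in_L:
  assumes "a \<in> L" and "b \<in> L"
  shows "mul a b \<in> L"
proof -
  have "mul a' b' \<in> L" if "a' \<in> {E, H, G}" "b' \<in> {E, H, G}" for a' b'
    using that generators_in_L subspace_neg[OF subspace_L] subspace_0[OF subspace_L]
    by (elim insertE emptyE) (simp_all add: sl2_mult_table)
  then show ?thesis
    using mul_span_into_subspace[OF subspace_L _ assms[unfolded L_def]] by blast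
qed

lemma jac_L: "a \<in> L \<Longrightarrow> b \<in> L \<Longrightarrow> c \<in> L \<Longrightarrow> jac mul a b c = 0"
  unfolding L_def
  by (rule jac_eq_0_on_span[of "{E, H, G}"]) (auto simp: jac_def sl2_mult_table mul_neg_left mul_neg_right)

definition N where "N = {x. \<forall>a\<in>L. \<forall>b\<in>L. jac mul x a b = 0}"

lemma N_set_eq: "N_set sm mul (span {E, H, F}) = N"
  by (simp add: N_set_def N_def span_EHF)

lemma subspace_N: "subspace N"
proof -
  have "N = (\<Inter>a\<in>L. \<Inter>b\<in>L. {x. jac mul x a b = 0})"
    by (auto simp: N_def)
  moreover have "subspace {x. jac mul x a b = 0}" for a b
  proof -
    interpret vector_space_pair sm sm ..
    show ?thesis
      using linear_subspace_kernel[OF linear_jac_left] .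
  qed
  ultimately show ?thesis
    by (simp add: subspace_Inter)
qed

lemma jac_N_L_L:
  assumes "x \<in> N" and "a \<in> L" and "b \<in> L"
  shows "jac mul x a b = 0" and "jac mul a x b = 0" and "jac mul a b x = 0"
  using assms by (simp_all add: N_def jac_cycle[of a x b] jac_cycle[of a b x] jac_cycle[of b x a])

lemma mul_N_L_in_N:
  assumes x: "x \<in> N" and a: "a \<in> L"
  shows "mul x a \<in> N"
proof -
  have "jac mul (mul x a) b c = 0" if "b \<in> L" "c \<in> L" for b c
  proof -
    have "jac mul (mul b c) x a = 0"
      using jac_N_L_L(2)[OF x mul_in_L[OF that] a] .
    then show ?thesis
      using sagle_identity[of x a b c] jac_N_L_L(1)[OF x that] jac_L[OF a that] by simp
  qed
  then show ?thesis by (simp add: N_def)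
qed

lemma mul_L_N_in_N:
  assumes "a \<in> L" and "x \<in> N"
  shows "mul a x \<in> N"
proof -
  have "- mul x a \<in> N"
    using subspace_neg[OF subspace_N mul_N_L_in_N[OF assms(2,1)]] .
  then show ?thesis by (simp add: mul_anticomm[of x a])
qed

lemma sl2_N_consequence:
  assumes x: "x \<in> N" and y: "y \<in> N" and "certifies sl2_table LLN_triple rs 1 tgt"
  shows "eval_lc (\<lambda>i. [E, H, G, x, y] ! i) tgt = 0"
proof -
  let ?\<rho> = "\<lambda>i. [E, H, G, x, y] ! i"
  have table: "table_holds sl2_table ?\<rho>"
    by (auto simp: table_holds_def sl2_table_def sl2_mult_table dest!: map_of_SomeD)
  have letter: "sl2_letter t \<Longrightarrow> eval ?\<rho> t \<in> L" for t
    using generators_in_L by (auto simp: sl2_letter_def)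
  have N_term: "N_term t \<Longrightarrow> eval ?\<rho> t \<in> N" for t
    by (induction t) (auto simp: x y letter mul_N_L_in_N mul_L_N_in_N)
  show ?thesis
    by (rule certificate_sound[OF table _ _ assms(3)])
      (auto simp: LLN_triple_def intro: jac_N_L_L letter N_term)
qed

lemma jac_L_N_N:
  assumes a: "a \<in> L" and x: "x \<in> N" and y: "y \<in> N"
  shows "jac mul a x y = 0"
proof -
  let ?\<rho> = "\<lambda>i. [E, H, G, x, y] ! i"
  \<comment> \<open>The coefficients were found by solving a linear system over the admissible relators.\<close>
  have JE: "eval_lc ?\<rho> (jac_lc vE vX vY) = 0"
    by (rule sl2_N_consequence[OF x y, where rs =
          "[(-1, Malcev vE vH vX vY), (-1, Malcev vE vH vY vX), (-1, Malcev vE vX vH vY),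
           (1, Malcev vG vE vX (Prod vE vY)), (-1, Malcev vH vE vX (Prod vH vY)),
           (-1, Malcev vE vE (Prod vG vX) vY), (1, Malcev vE vH (Prod vH vX) vY),
           (1, Malcev vH vE (Prod vH vX) vY), (-1, Malcev vH vH (Prod vE vX) vY),
           (-1, Malcev vE vE vY (Prod vG vX)), (1, Malcev vE vH vY (Prod vH vX)),
           (1, Malcev vH vE vY (Prod vH vX)), (-1, Malcev vH vH vY (Prod vE vX)),
           (1, Malcev vG vE (Prod vE vY) vX), (-1, Malcev vH vE (Prod vH vY) vX),
           (1, Malcev vE vX vG (Prod vE vY)), (-1, Malcev vE vX vH (Prod vH vY)),
           (-1, Malcev vE (Prod vE vX) vG vY), (1, Malcev vE (Prod vH vX) vH vY),
           (-1, Times (Jacobi vE vG vX) (Prod vE vY)), (-1, Times (Jacobi vE vH vX) vY),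
           (1, Times (Jacobi vE vH vX) (Prod vH vY)), (-1, Times (Jacobi vE vH (Prod vH vX)) vY),
           (-1, Times (Jacobi vE vG vY) (Prod vE vX)), (-2, Times (Jacobi vE vH vY) vX),
           (1, Times (Jacobi vE vH vY) (Prod vH vX)), (1, Times (Malcev vE vE vG vX) vY),
           (-1, Times (Malcev vE vH vH vX) vY), (1, Times (Times (Jacobi vE vG vX) vY) vE),
           (-1, Times (Times (Jacobi vE vH vX) vY) vH)]"])
      code_simp
  have JH: "eval_lc ?\<rho> (jac_lc vH vX vY) = 0"
    by (rule sl2_N_consequence[OF x y, where rs =
          "[(-1, Malcev vE vG vX vY), (-1, Malcev vE vG vY vX), (-1, Malcev vE vX vG vY),
           (-1, Malcev vH vE vX (Prod vG vY)), (-1, Malcev vH vG vX (Prod vE vY)),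
           (1, Malcev vE vG (Prod vH vX) vY), (2, Malcev vG vE (Prod vH vX) vY),
           (-1, Malcev vH vE (Prod vG vX) vY), (1, Malcev vH vG (Prod vE vX) vY),
           (1, Malcev vE vG vY (Prod vH vX)), (2, Malcev vG vE vY (Prod vH vX)),
           (-1, Malcev vH vE vY (Prod vG vX)), (1, Malcev vH vG vY (Prod vE vX)),
           (-1, Malcev vH vE (Prod vG vY) vX), (-1, Malcev vH vG (Prod vE vY) vX),
           (-1, Malcev vE vX vH (Prod vG vY)), (-1, Malcev vG vX vH (Prod vE vY)),
           (1, Malcev vE (Prod vH vX) vG vY), (2, Malcev vG (Prod vE vX) vH vY),
           (1, Times (Jacobi vE vG vX) vY), (1, Times (Jacobi vE vG vX) (Prod vH vY)),
           (2, Times (Jacobi vG vH vX) (Prod vE vY)), (-2, Times (Jacobi vE vG (Prod vH vX)) vY),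
           (1, Times (Jacobi vE vH (Prod vG vX)) vY), (-2, Times (Jacobi vE vG vY) vX),
           (1, Times (Jacobi vE vH vY) (Prod vG vX)), (1, Times (Jacobi vG vH vY) (Prod vE vX)),
           (-2, Times (Malcev vE vG vH vX) vY), (1, Times (Malcev vE vH vG vX) vY),
           (1, Times (Times (Jacobi vE vG vX) vY) vH), (-2, Times (Times (Jacobi vE vH vX) vY) vG)]"])
      code_simp
  have JG: "eval_lc ?\<rho> (jac_lc vG vX vY) = 0"
    by (rule sl2_N_consequence[OF x y, where rs =
          "[(1, Malcev vG vH vX vY), (1, Malcev vG vH vY vX), (1, Malcev vG vX vH vY),
           (-1, Malcev vG vE vX (Prod vG vY)), (-1, Malcev vH vG vX (Prod vH vY)),
           (1, Malcev vE vG (Prod vG vX) vY), (1, Malcev vG vE (Prod vG vX) vY),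
           (-1, Malcev vG vG (Prod vE vX) vY), (1, Malcev vG vH (Prod vH vX) vY),
           (1, Malcev vH vG (Prod vH vX) vY), (-1, Malcev vH vH (Prod vG vX) vY),
           (1, Malcev vE vG vY (Prod vG vX)), (1, Malcev vG vE vY (Prod vG vX)),
           (-1, Malcev vG vG vY (Prod vE vX)), (1, Malcev vG vH vY (Prod vH vX)),
           (1, Malcev vH vG vY (Prod vH vX)), (-1, Malcev vH vH vY (Prod vG vX)),
           (-1, Malcev vG vE (Prod vG vY) vX), (-1, Malcev vH vG (Prod vH vY) vX),
           (-1, Malcev vE vX vG (Prod vG vY)), (-1, Malcev vG vX vH (Prod vH vY)),
           (1, Malcev vE (Prod vG vX) vG vY), (1, Malcev vG (Prod vH vX) vH vY),
           (1, Times (Jacobi vE vG vX) (Prod vG vY)), (2, Times (Jacobi vG vH vX) vY),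
           (1, Times (Jacobi vG vH vX) (Prod vH vY)), (-1, Times (Jacobi vE vG (Prod vG vX)) vY),
           (-1, Times (Jacobi vG vH (Prod vH vX)) vY), (1, Times (Jacobi vE vG vY) (Prod vG vX)),
           (2, Times (Jacobi vG vH vY) vX), (1, Times (Jacobi vG vH vY) (Prod vH vX)),
           (-1, Times (Malcev vE vG vG vX) vY), (-1, Times (Malcev vG vH vH vX) vY),
           (-1, Times (Times (Jacobi vE vG vX) vY) vG), (-1, Times (Times (Jacobi vG vH vX) vY) vH)]"])
      code_simp
  have "jac mul E x y = 0" "jac mul H x y = 0" "jac mul G x y = 0"
    using JE JH JG by (simp_all add: eval_lc_jac_lc)
  then show ?thesis
    using linear_eq_0_on_span[OF linear_jac_left _ a[unfolded L_def]] by auto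
qed

lemma mul_in_N:
  assumes x: "x \<in> N" and y: "y \<in> N"
  shows "mul x y \<in> N"
proof -
  have "jac mul (mul x y) a b = 0" if "a \<in> L" "b \<in> L" for a b
    using sagle_identity[of x y a b] jac_N_L_L(1)[OF x that] jac_N_L_L(1)[OF y that]
      jac_L_N_N[OF mul_in_L[OF that] x y]
    by simp
  then show ?thesis by (simp add: N_def)
qed

lemma jac_N_times_L:
  assumes x: "x \<in> N" and y: "y \<in> N" and z: "z \<in> N" and a: "a \<in> L"
  shows "mul (jac mul x y z) a = 0"
proof -
  have "sm 2 (mul (jac mul x y z) a) = 0"
    using jac_mul_identity[of x y z a] jac_L_N_N[OF a y mul_in_N[OF x z]]
      jac_L_N_N[OF a x mul_in_N[OF y z]] jac_L_N_N[OF a z mul_in_N[OF x y]]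
    by simp
  then show ?thesis
    using two_nonzero by simp
qed

end

theorem mainTheorem3:
  fixes sm :: "'a::field \<Rightarrow> 'm::ab_group_add \<Rightarrow> 'm"
    and mul :: "'m \<Rightarrow> 'm \<Rightarrow> 'm"
    and E H F :: 'm
  assumes char2: "(2::'a) \<noteq> 0" and char3: "(3::'a) \<noteq> 0"
    and HM: "in_variety_H sm mul"
    and sl2: "sl2_triple sm mul E H F"
    and faithful: "\<forall>m. m \<noteq> 0 \<longrightarrow> (\<exists>l\<in>module.span sm {E, H, F}. mul m l \<noteq> 0)"
  shows "module.subspace sm (N_set sm mul (module.span sm {E, H, F}))
    \<and> (\<forall>x\<in>N_set sm mul (module.span sm {E, H, F}). \<forall>y\<in>N_set sm mul (module.span sm {E, H, F}).
          mul x y \<in> N_set sm mul (module.span sm {E, H, F}))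
    \<and> (\<forall>x\<in>N_set sm mul (module.span sm {E, H, F}). \<forall>y\<in>N_set sm mul (module.span sm {E, H, F}).
         \<forall>z\<in>N_set sm mul (module.span sm {E, H, F}). jac mul x y z = 0)"
proof -
  interpret sl2_in_malcev sm mul E H F
    using HM sl2 char2
    unfolding sl2_in_malcev_def sl2_in_malcev_axioms_def malcev_def malcev_axioms_def
      anticomm_algebra_def anticomm_algebra_axioms_def
    by (simp add: in_variety_H_def malcev_algebra_def sl2_triple_def)
  have "jac mul x y z = 0" if "x \<in> N" "y \<in> N" "z \<in> N" for x y z
    using faithful jac_N_times_L[OF that] by (auto simp: span_EHF)
  then show ?thesis
    by (simp add: N_set_eq subspace_N mul_in_N)
qed

end
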